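(* Let $O\colon[0,1]^2\to[0,1]$ be a commutative binary function that is non-decreasing in each variable. If $x,y,z\in[0,1]$ satisfy $O(x,y)\in\{x,y\}$, $O(x,z)\in\{x,z\}$ and $O(y,z)\in\{y,z\}$, then $O(O(x,y),z)=O(O(y,z),x)=O(O(x,z),y)$. *)

theory Defs
  imports Complex_Main
begin

end

theory Submission
  imports Defs
begin

text \<open>If a commutative monotone operation picks one of its arguments on each pair of
  \<open>a \<le> b \<le> c\<close>, then monotonicity squeezes \<open>Op a b \<le> Op a c \<le> Op b c\<close>. So either
  \<open>Op a c = a\<close>, which forces \<open>Op a b = a\<close>, or \<open>Op a c = c\<close>, which forces \<open>Op b c = c\<close>.\<close>

lemma conservative_mono_bracketings_eq_ordered:
  fixes Op :: "'a::linorder \<Rightarrow> 'a \<Rightarrow> 'a"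
  assumes comm: "\<And>u v. u \<in> D \<Longrightarrow> v \<in> D \<Longrightarrow> Op u v = Op v u"
    and mono: "\<And>u u' v. u \<in> D \<Longrightarrow> u' \<in> D \<Longrightarrow> v \<in> D \<Longrightarrow> u \<le> u' \<Longrightarrow> Op u v \<le> Op u' v"
    and D: "a \<in> D" "b \<in> D" "c \<in> D"
    and order: "a \<le> b" "b \<le> c"
    and ab: "Op a b \<in> {a, b}" and ac: "Op a c \<in> {a, c}" and bc: "Op b c \<in> {b, c}"
  shows "Op (Op a b) c = Op a c" "Op (Op b c) a = Op a c" "Op (Op a c) b = Op a c"
proof -
  have "Op b a \<le> Op c a" using mono D order by blast
  then have ab_le_ac: "Op a b \<le> Op a c" using comm D by simp
  have ac_le_bc: "Op a c \<le> Op b c" using mono D order by blast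
  from ac consider "Op a c = a" | "Op a c = c" by blast
  then have "Op (Op a b) c = Op a c \<and> Op (Op b c) a = Op a c \<and> Op (Op a c) b = Op a c"
  proof cases
    case 1
    with ab ab_le_ac order have "Op a b = a" by auto
    with 1 bc comm D show ?thesis by auto
  next
    case 2
    with bc ac_le_bc order have "Op b c = c" by auto
    with 2 ab comm D show ?thesis by auto
  qed
  then show "Op (Op a b) c = Op a c" "Op (Op b c) a = Op a c" "Op (Op a c) b = Op a c"
    by simp_all
qed

lemma conservative_mono_bracketings_eq:
  fixes Op :: "'a::linorder \<Rightarrow> 'a \<Rightarrow> 'a"
  assumes comm: "\<And>u v. u \<in> D \<Longrightarrow> v \<in> D \<Longrightarrow> Op u v = Op v u"
    and mono: "\<And>u u' v. u \<in> D \<Longrightarrow> u' \<in> D \<Longrightarrow> v \<in> D \<Longrightarrow> u \<le> u' \<Longrightarrow> Op u v \<le> Op u' v"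
    and D: "x \<in> D" "y \<in> D" "z \<in> D"
    and xy: "Op x y \<in> {x, y}" and xz: "Op x z \<in> {x, z}" and yz: "Op y z \<in> {y, z}"
  shows "Op (Op x y) z = Op (Op y z) x \<and> Op (Op y z) x = Op (Op x z) y"
proof -
  note ordered = conservative_mono_bracketings_eq_ordered[of D Op, OF comm mono]
  have sym: "Op y x = Op x y" "Op z x = Op x z" "Op z y = Op y z" using comm D by auto
  consider "x \<le> y" "y \<le> z" | "x \<le> z" "z \<le> y" | "y \<le> x" "x \<le> z"
    | "y \<le> z" "z \<le> x" | "z \<le> x" "x \<le> y" | "z \<le> y" "y \<le> x"
    by fastforce
  then show ?thesis
  proof cases
    case 1 with ordered[of x y z] D xy xz yz sym show ?thesis by (simp add: insert_commute)
  next
    case 2 with ordered[of x z y] D xy xz yz sym show ?thesis by (simp add: insert_commute)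
  next
    case 3 with ordered[of y x z] D xy xz yz sym show ?thesis by (simp add: insert_commute)
  next
    case 4 with ordered[of y z x] D xy xz yz sym show ?thesis by (simp add: insert_commute)
  next
    case 5 with ordered[of z x y] D xy xz yz sym show ?thesis by (simp add: insert_commute)
  next
    case 6 with ordered[of z y x] D xy xz yz sym show ?thesis by (simp add: insert_commute)
  qed
qed

theorem corollary1:
  fixes Op :: "real \<Rightarrow> real \<Rightarrow> real" and x y z :: real
  assumes range: "\<And>a b. a \<in> {0..1} \<Longrightarrow> b \<in> {0..1} \<Longrightarrow> Op a b \<in> {0..1}"
    and comm: "\<And>a b. a \<in> {0..1} \<Longrightarrow> b \<in> {0..1} \<Longrightarrow> Op a b = Op b a"
    and mono: "\<And>a a' b. a \<in> {0..1} \<Longrightarrow> a' \<in> {0..1} \<Longrightarrow> b \<in> {0..1} \<Longrightarrow> a \<le> a' \<Longrightarrow> Op a b \<le> Op a' b"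
    and mono2: "\<And>a b b'. a \<in> {0..1} \<Longrightarrow> b \<in> {0..1} \<Longrightarrow> b' \<in> {0..1} \<Longrightarrow> b \<le> b' \<Longrightarrow> Op a b \<le> Op a b'"
    and xyz: "x \<in> {0..1}" "y \<in> {0..1}" "z \<in> {0..1}"
    and hxy: "Op x y \<in> {x, y}"
    and hxz: "Op x z \<in> {x, z}"
    and hyz: "Op y z \<in> {y, z}"
  shows "Op (Op x y) z = Op (Op y z) x \<and> Op (Op y z) x = Op (Op x z) y"
  using conservative_mono_bracketings_eq[of "{0..1}" Op, OF comm mono xyz hxy hxz hyz] .

end
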